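(* Let $(\mathbf{x},y)\in\mathcal{X}\times\{1,\dots,c\}$, let $\mathbb{F}_s:\mathcal{X}\to\{1,\dots,c\}$ be a single-label classifier, let $\mathcal{R}$ be a set of patch regions and let $\mathcal{M}$ be an $\mathcal{R}$-covering mask set. Let $\boldsymbol{\lambda}\in\{0,1\}^{\mathcal{M}}$ be the array returned by DoubleMaskingCert$(\mathbf{x},y,\mathbb{F}_s,\mathcal{R},\mathcal{M})$. If $\mathbf{m}^*\in\mathcal{M}$ satisfies $\boldsymbol{\lambda}[\mathbf{m}^*]=1$, then for every patch region $\mathbf{r}\in\mathcal{R}$ that is covered by $\mathbf{m}^*$ (i.e. $\mathbf{m}^*[i,j]\le\mathbf{r}[i,j]$ for all $(i,j)$) and every $\mathbf{x}''\in\mathcal{X}$, $$\mathrm{DoubleMaskingInfer}(\mathbf{r}\circ\mathbf{x}+(\mathbf{1}-\mathbf{r})\circ\mathbf{x}'',\ \mathbb{F}_s,\ \mathcal{M})=y,$$ regardless of how ties in the majority vote and the iteration order over disagreers are resolved.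
   Context: Images lie in $\mathcal{X}\subseteq\mathbb{R}^{w\times h\times\gamma}$; patch regions and masks are binary matrices in $\{0,1\}^{w\times h}$ with entries $0$ inside the region/mask and $1$ outside; $\circ$ is entrywise product (broadcast over channels). A mask set $\mathcal{M}$ is $\mathcal{R}$-covering if for every $\mathbf{r}\in\mathcal{R}$ there is $\mathbf{m}\in\mathcal{M}$ with $\mathbf{m}[i,j]\le\mathbf{r}[i,j]$ for all $(i,j)$. MaskPred$(\mathbf{z},\mathbb{F}_s,\mathcal{M})$: form $\mathcal{P}=\{(\mathbf{m},\mathbb{F}_s(\mathbf{z}\circ\mathbf{m})):\mathbf{m}\in\mathcal{M}\}$; let $\hat{y}_{maj}$ be a label attaining the maximum of $|\{(\mathbf{m},\hat y)\in\mathcal{P}:\hat y=y^*\}|$ over $y^*$ (ties broken arbitrarily); let $\mathcal{P}_{dis}=\{(\mathbf{m},\hat y)\in\mathcal{P}:\hat y\ne\hat y_{maj}\}$; return $(\hat y_{maj},\mathcal{P}_{dis})$. DoubleMaskingInfer$(\mathbf{z},\mathbb{F}_s,\mathcal{M})$: compute $(\hat y_{maj},\mathcal{P}_{dis})=$MaskPred$(\mathbf{z},\mathbb{F}_s,\mathcal{M})$. If $\mathcal{P}_{dis}=\emptyset$, return $\hat y_{maj}$. Otherwise, iterate over $(\mathbf{m}_{dis},\hat y_{dis})\in\mathcal{P}_{dis}$ in some order; for each compute $(\hat y',\mathcal{P}')=$MaskPred$(\mathbf{z}\circ\mathbf{m}_{dis},\mathbb{F}_s,\mathcal{M})$ and if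 $\mathcal{P}'=\emptyset$ return $\hat y_{dis}$. If no disagreer returned, return $\hat y_{maj}$. DoubleMaskingCert$(\mathbf{x},y,\mathbb{F}_s,\mathcal{R},\mathcal{M})$: if $\mathcal{M}$ is not $\mathcal{R}$-covering, return $(0,\mathbf{0})$. Otherwise initialize $\boldsymbol{\lambda}[\mathbf{m}]=1$ for all $\mathbf{m}\in\mathcal{M}$ and $certVal=1$; for every ordered pair $(\mathbf{m}_0,\mathbf{m}_1)\in\mathcal{M}\times\mathcal{M}$, if $\mathbb{F}_s(\mathbf{x}\circ\mathbf{m}_0\circ\mathbf{m}_1)\ne y$ then set $certVal=0$, $\boldsymbol{\lambda}[\mathbf{m}_0]=0$, $\boldsymbol{\lambda}[\mathbf{m}_1]=0$. Return $(certVal,\boldsymbol{\lambda})$. (Thus $\boldsymbol{\lambda}[\mathbf{m}^*]=1$ iff $\mathbb{F}_s(\mathbf{x}\circ\mathbf{m}^*\circ\mathbf{m})=y$ and $\mathbb{F}_s(\mathbf{x}\circ\mathbf{m}\circ\mathbf{m}^* )=y$ for all $\mathbf{m}\in\mathcal{M}$, given $\mathcal{M}$ is $\mathcal{R}$-covering.) *)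

theory Defs
  imports Complex_Main
begin

text \<open>Images are functions on finite index types (width, height, channel) to reals;
  masks and patch regions are functions on (width, height) with values in {0,1}.\<close>

type_synonym ('w,'h,'g) image = "'w \<Rightarrow> 'h \<Rightarrow> 'g \<Rightarrow> real"
type_synonym ('w,'h) mask = "'w \<Rightarrow> 'h \<Rightarrow> real"

definition binary :: "('w,'h) mask \<Rightarrow> bool" where
  "binary m \<longleftrightarrow> (\<forall>i j. m i j = 0 \<or> m i j = 1)"

definition apply_mask :: "('w,'h,'g) image \<Rightarrow> ('w,'h) mask \<Rightarrow> ('w,'h,'g) image" (infixl "\<circ>\<^sub>m" 70) where
  "z \<circ>\<^sub>m m = (\<lambda>i j k. z i j k * m i j)"

definition patch :: "('w,'h) mask \<Rightarrow> ('w,'h,'g) image \<Rightarrow> ('w,'h,'g) image \<Rightarrow> ('w,'h,'g) image" where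
  "patch r x x2 = (\<lambda>i j k. r i j * x i j k + (1 - r i j) * x2 i j k)"

definition covers :: "('w,'h) mask \<Rightarrow> ('w,'h) mask \<Rightarrow> bool" where
  "covers m r \<longleftrightarrow> (\<forall>i j. m i j \<le> r i j)"

definition R_covering :: "('w,'h) mask set \<Rightarrow> ('w,'h) mask set \<Rightarrow> bool" where
  "R_covering R M \<longleftrightarrow> (\<forall>r\<in>R. \<exists>m\<in>M. covers m r)"

text \<open>MaskPred: the admissible majority labels (any label in {1..c} attaining the maximum
  vote count; ties may be broken arbitrarily) and the resulting disagreer set.\<close>
definition votes :: "(('w,'h,'g) image \<Rightarrow> nat) \<Rightarrow> ('w,'h) mask set \<Rightarrow> ('w,'h,'g) image \<Rightarrow> nat \<Rightarrow> nat" where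
  "votes F M z l = card {m\<in>M. F (z \<circ>\<^sub>m m) = l}"

definition is_majority :: "(('w,'h,'g) image \<Rightarrow> nat) \<Rightarrow> nat \<Rightarrow> ('w,'h) mask set \<Rightarrow> ('w,'h,'g) image \<Rightarrow> nat \<Rightarrow> bool" where
  "is_majority F c M z l \<longleftrightarrow> l \<in> {1..c} \<and> (\<forall>l'\<in>{1..c}. votes F M z l' \<le> votes F M z l)"

definition dis_set :: "(('w,'h,'g) image \<Rightarrow> nat) \<Rightarrow> ('w,'h) mask set \<Rightarrow> ('w,'h,'g) image \<Rightarrow> nat \<Rightarrow> (('w,'h) mask \<times> nat) set" where
  "dis_set F M z l = {(m, F (z \<circ>\<^sub>m m)) | m. m \<in> M \<and> F (z \<circ>\<^sub>m m) \<noteq> l}"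

text \<open>All possible outputs of DoubleMaskingInfer over all tie-breaking choices (in every
  MaskPred call) and all iteration orders over the disagreers.\<close>
definition dm_infer_outputs :: "(('w,'h,'g) image \<Rightarrow> nat) \<Rightarrow> nat \<Rightarrow> ('w,'h) mask set \<Rightarrow> ('w,'h,'g) image \<Rightarrow> nat set" where
  "dm_infer_outputs F c M z = {out. \<exists>ymaj. is_majority F c M z ymaj \<and>
     ((dis_set F M z ymaj = {} \<and> out = ymaj) \<or>
      (dis_set F M z ymaj \<noteq> {} \<and>
       (\<exists>ord k. distinct ord \<and> set ord = dis_set F M z ymaj \<and> k \<le> length ord \<and>
          (\<forall>i<k. \<exists>y'. is_majority F c M (z \<circ>\<^sub>m fst (ord ! i)) y' \<and>
                      dis_set F M (z \<circ>\<^sub>m fst (ord ! i)) y' \<noteq> {}) \<and>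
          ((k < length ord \<and> (\<exists>y'. is_majority F c M (z \<circ>\<^sub>m fst (ord ! k)) y' \<and>
                      dis_set F M (z \<circ>\<^sub>m fst (ord ! k)) y' = {}) \<and> out = snd (ord ! k)) \<or>
           (k = length ord \<and> out = ymaj)))))}"

text \<open>DoubleMaskingCert, returning (certVal, lambda); lambda is 0 outside M.\<close>
definition dm_cert :: "('w,'h,'g) image \<Rightarrow> nat \<Rightarrow> (('w,'h,'g) image \<Rightarrow> nat) \<Rightarrow> ('w,'h) mask set \<Rightarrow> ('w,'h) mask set \<Rightarrow> nat \<times> (('w,'h) mask \<Rightarrow> nat)" where
  "dm_cert x y F R M =
     (if \<not> R_covering R M then (0, \<lambda>_. 0)
      else ((if \<exists>m0\<in>M. \<exists>m1\<in>M. F (x \<circ>\<^sub>m m0 \<circ>\<^sub>m m1) \<noteq> y then 0 else 1),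
            (\<lambda>m. if m \<in> M \<and> \<not> (\<exists>m0\<in>M. \<exists>m1\<in>M. F (x \<circ>\<^sub>m m0 \<circ>\<^sub>m m1) \<noteq> y \<and> (m = m0 \<or> m = m1))
                 then 1 else 0)))"

end

theory Submission
  imports Defs
begin

text \<open>Since lambda[m*] = 1, every prediction F(x o m* o m) with m in M is y, and since m* covers
  the patch, z o m* = x o m* for the patched image z. So the second round of MaskPred at m* is
  unanimous for y, and a wrong first-round majority always has m* among its disagreers, which
  returns y. Conversely, a disagreer m whose second round is unanimous votes y: masks commute and
  are idempotent, so its second-round votes under m* and under m are y and its own label.\<close>

(* Defs uses the symbol of map composition for masking. *)
no_notation map_comp (infixl \<open>\<circ>\<^sub>m\<close> 55)

lemma apply_mask_commute: "z \<circ>\<^sub>m a \<circ>\<^sub>m b = z \<circ>\<^sub>m b \<circ>\<^sub>m a"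
  unfolding apply_mask_def by (simp add: ac_simps)

lemma apply_mask_idem:
  assumes "binary m"
  shows "z \<circ>\<^sub>m m \<circ>\<^sub>m m = z \<circ>\<^sub>m m"
proof (intro ext)
  fix i j k
  have "m i j = 0 \<or> m i j = 1"
    using assms unfolding binary_def by blast
  then show "(z \<circ>\<^sub>m m \<circ>\<^sub>m m) i j k = (z \<circ>\<^sub>m m) i j k"
    unfolding apply_mask_def by auto
qed

lemma apply_mask_patch_covered:
  assumes "covers m r" "binary m" "binary r"
  shows "patch r x x2 \<circ>\<^sub>m m = x \<circ>\<^sub>m m"
proof (intro ext)
  fix i j k
  have "m i j = 0 \<or> (m i j = 1 \<and> r i j = 1)"
    using assms unfolding covers_def binary_def by (metis not_one_le_zero)
  then show "(patch r x x2 \<circ>\<^sub>m m) i j k = (x \<circ>\<^sub>m m) i j k"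
    unfolding apply_mask_def patch_def by auto
qed

definition unanimous :: "(('w,'h,'g) image \<Rightarrow> nat) \<Rightarrow> ('w,'h) mask set \<Rightarrow> ('w,'h,'g) image \<Rightarrow> nat \<Rightarrow> bool" where
  "unanimous F M z l \<longleftrightarrow> (\<forall>m\<in>M. F (z \<circ>\<^sub>m m) = l)"

lemma dis_set_empty_iff_unanimous: "dis_set F M z l = {} \<longleftrightarrow> unanimous F M z l"
  unfolding dis_set_def unanimous_def by auto

lemma mem_dis_setD: "(m, l') \<in> dis_set F M z l \<Longrightarrow> m \<in> M \<and> l' = F (z \<circ>\<^sub>m m) \<and> l' \<noteq> l"
  unfolding dis_set_def by auto

lemma mem_dis_setI: "m \<in> M \<Longrightarrow> F (z \<circ>\<^sub>m m) \<noteq> l \<Longrightarrow> (m, F (z \<circ>\<^sub>m m)) \<in> dis_set F M z l"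
  unfolding dis_set_def by auto

lemma finite_dis_set: "finite M \<Longrightarrow> finite (dis_set F M z l)"
  unfolding dis_set_def by (simp add: setcompr_eq_image)

lemma is_majority_exists:
  assumes "1 \<le> c"
  obtains l where "is_majority F c M z l"
proof -
  let ?V = "votes F M z ` {1..c}"
  have "finite ?V" "?V \<noteq> {}"
    using assms by auto
  then have "Max ?V \<in> ?V"
    by (rule Max_in)
  then obtain l where "Max ?V = votes F M z l" "l \<in> {1..c}"
    by (rule imageE)
  with Max_ge[OF \<open>finite ?V\<close>] have "is_majority F c M z l"
    unfolding is_majority_def by (metis image_eqI)
  then show thesis by (rule that)
qed

lemma is_majority_unanimous_iff:
  assumes "finite M" "M \<noteq> {}" "\<forall>w. F w \<in> {1..c}" "unanimous F M z l"
  shows "is_majority F c M z l' \<longleftrightarrow> l' = l"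
proof -
  have all: "{m\<in>M. F (z \<circ>\<^sub>m m) = l} = M" and none: "l'' \<noteq> l \<Longrightarrow> {m\<in>M. F (z \<circ>\<^sub>m m) = l''} = {}" for l''
    using assms(4) unfolding unanimous_def by auto
  have votes: "votes F M z l = card M" "votes F M z l'' = 0" if "l'' \<noteq> l" for l''
    unfolding votes_def all none[OF that] by simp_all
  have "l \<in> {1..c}"
    using assms(2-4) unfolding unanimous_def by force
  moreover have "card M > 0"
    using assms(1,2) by (simp add: card_gt_0_iff)
  ultimately show ?thesis
    unfolding is_majority_def using votes by (metis le_zero_eq not_gr_zero order_refl zero_le)
qed

lemma second_round_continues_iff:
  assumes "finite M" "M \<noteq> {}" "\<forall>w. F w \<in> {1..c}"
  shows "(\<exists>l. is_majority F c M z l \<and> dis_set F M z l \<noteq> {}) \<longleftrightarrow> \<not> (\<exists>l. unanimous F M z l)"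
proof
  assume "\<exists>l. is_majority F c M z l \<and> dis_set F M z l \<noteq> {}"
  then show "\<not> (\<exists>l. unanimous F M z l)"
    using is_majority_unanimous_iff[OF assms] dis_set_empty_iff_unanimous by metis
next
  assume "\<not> (\<exists>l. unanimous F M z l)"
  moreover have "1 \<le> c"
    using assms(3) by (metis atLeastAtMost_iff order_trans)
  ultimately show "\<exists>l. is_majority F c M z l \<and> dis_set F M z l \<noteq> {}"
    using is_majority_exists dis_set_empty_iff_unanimous by metis
qed

lemma second_round_returns_iff:
  assumes "finite M" "M \<noteq> {}" "\<forall>w. F w \<in> {1..c}"
  shows "(\<exists>l. is_majority F c M z l \<and> dis_set F M z l = {}) \<longleftrightarrow> (\<exists>l. unanimous F M z l)"
  using is_majority_unanimous_iff[OF assms] dis_set_empty_iff_unanimous by metis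

lemma dm_infer_outputsE:
  assumes "out \<in> dm_infer_outputs F c M z" "finite M" "M \<noteq> {}" "\<forall>w. F w \<in> {1..c}"
  obtains (agree) l where "is_majority F c M z l" "unanimous F M z l" "out = l"
  | (returned) l m where "(m, out) \<in> dis_set F M z l" "\<exists>l'. unanimous F M (z \<circ>\<^sub>m m) l'"
  | (exhausted) l where "is_majority F c M z l" "out = l"
      "\<forall>(m, l')\<in>dis_set F M z l. \<not> (\<exists>l''. unanimous F M (z \<circ>\<^sub>m m) l'')"
proof -
  note continues = second_round_continues_iff[OF assms(2-4)]
  and returns = second_round_returns_iff[OF assms(2-4)]
  obtain l where maj: "is_majority F c M z l" and alt:
    "(dis_set F M z l = {} \<and> out = l) \<or>
     (\<exists>ord k. set ord = dis_set F M z l \<and> k \<le> length ord \<and>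
        (\<forall>i<k. \<not> (\<exists>l'. unanimous F M (z \<circ>\<^sub>m fst (ord ! i)) l')) \<and>
        ((k < length ord \<and> (\<exists>l'. unanimous F M (z \<circ>\<^sub>m fst (ord ! k)) l') \<and> out = snd (ord ! k)) \<or>
         (k = length ord \<and> out = l)))"
    using assms(1) unfolding dm_infer_outputs_def continues returns by blast
  show thesis
  proof (cases "dis_set F M z l = {} \<and> out = l")
    case True
    then show thesis using agree maj dis_set_empty_iff_unanimous by blast
  next
    case False
    then obtain ord k where ord: "set ord = dis_set F M z l" "k \<le> length ord"
      and skipped: "\<forall>i<k. \<not> (\<exists>l'. unanimous F M (z \<circ>\<^sub>m fst (ord ! i)) l')"
      and stop: "(k < length ord \<and> (\<exists>l'. unanimous F M (z \<circ>\<^sub>m fst (ord ! k)) l') \<and> out = snd (ord ! k)) \<or>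
         (k = length ord \<and> out = l)"
      using alt by blast
    show thesis
    proof (cases "k < length ord")
      case True
      then show thesis
        using returned[of "fst (ord ! k)" l] stop ord(1) nth_mem by fastforce
    next
      case False
      with ord(2) have "k = length ord" by simp
      have "\<forall>(m, l')\<in>dis_set F M z l. \<not> (\<exists>l''. unanimous F M (z \<circ>\<^sub>m m) l'')"
      proof
        fix p assume "p \<in> dis_set F M z l"
        then obtain i where "i < k" "ord ! i = p"
          using ord(1) \<open>k = length ord\<close> by (metis in_set_conv_nth)
        then show "case p of (m, l') \<Rightarrow> \<not> (\<exists>l''. unanimous F M (z \<circ>\<^sub>m m) l'')"
          using skipped by (cases p) auto
      qed
      then show thesis using exhausted maj stop False by blast
    qed
  qed
qed

lemma dm_infer_outputs_returnedI:
  assumes "finite M" "\<forall>w. F w \<in> {1..c}" "is_majority F c M z l"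
    and "(m, out) \<in> dis_set F M z l" "unanimous F M (z \<circ>\<^sub>m m) l'"
  shows "out \<in> dm_infer_outputs F c M z"
proof -
  have "M \<noteq> {}" using assms(4) mem_dis_setD by fast
  have second: "\<exists>l'. is_majority F c M (z \<circ>\<^sub>m m) l' \<and> dis_set F M (z \<circ>\<^sub>m m) l' = {}"
    using assms(5) second_round_returns_iff[OF assms(1) \<open>M \<noteq> {}\<close> assms(2)] by blast
  obtain rest where rest: "distinct rest" "set rest = dis_set F M z l - {(m, out)}"
    using finite_distinct_list finite_Diff finite_dis_set[OF assms(1)] by metis
  then have "distinct ((m, out) # rest)" "set ((m, out) # rest) = dis_set F M z l"
    using assms(4) by auto
  then show ?thesis
    unfolding dm_infer_outputs_def mem_Collect_eq
  proof (intro exI[of _ l] conjI disjI2)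
    show "is_majority F c M z l" by (fact assms(3))
    show "dis_set F M z l \<noteq> {}" using assms(4) by blast
  qed (rule exI[of _ "(m, out) # rest"], rule exI[of _ 0], use second in auto)
qed

lemma dm_infer_outputs_exhaustedI:
  assumes "finite M" "\<forall>w. F w \<in> {1..c}" "is_majority F c M z l"
    and "\<forall>(m, l')\<in>dis_set F M z l. \<not> (\<exists>l''. unanimous F M (z \<circ>\<^sub>m m) l'')"
  shows "l \<in> dm_infer_outputs F c M z"
proof (cases "dis_set F M z l = {}")
  case True
  then show ?thesis unfolding dm_infer_outputs_def using assms(3) by blast
next
  case False
  then have "M \<noteq> {}" using mem_dis_setD by fast
  obtain ord where ord: "distinct ord" "set ord = dis_set F M z l"
    using finite_distinct_list finite_dis_set[OF assms(1)] by metis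
  have continues: "\<forall>i<length ord. \<exists>l'. is_majority F c M (z \<circ>\<^sub>m fst (ord ! i)) l' \<and>
                                          dis_set F M (z \<circ>\<^sub>m fst (ord ! i)) l' \<noteq> {}"
  proof (intro allI impI)
    fix i assume "i < length ord"
    then have "ord ! i \<in> dis_set F M z l"
      using ord(2) nth_mem by metis
    then have "\<not> (\<exists>l'. unanimous F M (z \<circ>\<^sub>m fst (ord ! i)) l')"
      using assms(4) by (cases "ord ! i") auto
    then show "\<exists>l'. is_majority F c M (z \<circ>\<^sub>m fst (ord ! i)) l' \<and>
                   dis_set F M (z \<circ>\<^sub>m fst (ord ! i)) l' \<noteq> {}"
      using second_round_continues_iff[OF assms(1) \<open>M \<noteq> {}\<close> assms(2)] by blast
  qed
  show ?thesis
    unfolding dm_infer_outputs_def mem_Collect_eq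
  proof (intro exI[of _ l] conjI disjI2)
    show "is_majority F c M z l" by (fact assms(3))
    show "dis_set F M z l \<noteq> {}" by (fact False)
  qed (rule exI[of _ ord], rule exI[of _ "length ord"], use ord continues in auto)
qed

lemma dm_infer_outputs_eq_singleton:
  assumes "finite M" "y \<in> {1..c}" "\<forall>w. F w \<in> {1..c}"
    and settled_votes_y: "\<And>m. m \<in> M \<Longrightarrow> \<exists>l. unanimous F M (z \<circ>\<^sub>m m) l \<Longrightarrow> F (z \<circ>\<^sub>m m) = y"
    and witness: "m0 \<in> M" "\<exists>l. unanimous F M (z \<circ>\<^sub>m m0) l"
  shows "dm_infer_outputs F c M z = {y}"
proof -
  have "M \<noteq> {}" using witness(1) by blast
  have m0_votes_y: "F (z \<circ>\<^sub>m m0) = y"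
    using settled_votes_y witness by blast
  have m0_dis: "(m0, y) \<in> dis_set F M z l" if "l \<noteq> y" for l
    using mem_dis_setI[OF witness(1)] m0_votes_y that by metis
  have "out = y" if "out \<in> dm_infer_outputs F c M z" for out
    using that assms(1) \<open>M \<noteq> {}\<close> assms(3)
  proof (cases rule: dm_infer_outputsE)
    case (agree l)
    then show ?thesis using m0_votes_y witness(1) unfolding unanimous_def by force
  next
    case (returned l m)
    then show ?thesis using settled_votes_y mem_dis_setD by metis
  next
    case (exhausted l)
    then show ?thesis using m0_dis witness(2) by fastforce
  qed
  moreover have "y \<in> dm_infer_outputs F c M z"
  proof -
    have "1 \<le> c" using assms(2) by simp
    then obtain l where maj: "is_majority F c M z l"
      by (rule is_majority_exists)
    show ?thesis
    proof (cases "l = y")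
      case True
      have "\<forall>(m, l')\<in>dis_set F M z l. \<not> (\<exists>l''. unanimous F M (z \<circ>\<^sub>m m) l'')"
        using settled_votes_y mem_dis_setD True by fast
      then show ?thesis using dm_infer_outputs_exhaustedI[OF assms(1,3) maj] True by blast
    next
      case False
      then show ?thesis
        using dm_infer_outputs_returnedI[OF assms(1,3) maj m0_dis] witness(2) by blast
    qed
  qed
  ultimately show ?thesis by blast
qed

lemma unanimous_of_dm_cert_lambda_eq_1:
  assumes "R_covering R M" "snd (dm_cert x y F R M) m = 1"
  shows "unanimous F M (x \<circ>\<^sub>m m) y"
  using assms unfolding dm_cert_def unanimous_def by (auto split: if_splits)

lemma unanimous_second_round_forces_label:
  assumes "\<forall>m\<in>M. binary m" "m0 \<in> M" "unanimous F M (z \<circ>\<^sub>m m0) y"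
    and "m \<in> M" "unanimous F M (z \<circ>\<^sub>m m) l"
  shows "F (z \<circ>\<^sub>m m) = y"
proof -
  have "F (z \<circ>\<^sub>m m) = F (z \<circ>\<^sub>m m \<circ>\<^sub>m m)"
    using apply_mask_idem assms(1,4) by metis
  also have "\<dots> = F (z \<circ>\<^sub>m m \<circ>\<^sub>m m0)"
    using assms(2,4,5) unfolding unanimous_def by simp
  also have "\<dots> = y"
    using assms(3,4) apply_mask_commute unfolding unanimous_def by metis
  finally show ?thesis .
qed

theorem mainTheorem3:
  fixes x :: "('w::finite,'h::finite,'g::finite) image"
    and y c :: nat
    and F :: "('w,'h,'g) image \<Rightarrow> nat"
    and R M :: "('w,'h) mask set"
    and m_star :: "('w,'h) mask"
  assumes "y \<in> {1..c}"
    and "\<forall>z. F z \<in> {1..c}"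
    and "\<forall>r\<in>R. binary r"
    and "finite M" and "\<forall>m\<in>M. binary m"
    and "R_covering R M"
    and "m_star \<in> M"
    and "snd (dm_cert x y F R M) m_star = 1"
  shows "\<forall>r\<in>R. covers m_star r \<longrightarrow>
           (\<forall>x2 :: ('w,'h,'g) image. dm_infer_outputs F c M (patch r x x2) = {y})"
proof (intro ballI impI allI)
  fix r x2
  assume "r \<in> R" "covers m_star r"
  then have "patch r x x2 \<circ>\<^sub>m m_star = x \<circ>\<^sub>m m_star"
    using apply_mask_patch_covered assms(3,5,7) by blast
  then have star: "unanimous F M (patch r x x2 \<circ>\<^sub>m m_star) y"
    using unanimous_of_dm_cert_lambda_eq_1[OF assms(6,8)] by simp
  show "dm_infer_outputs F c M (patch r x x2) = {y}"
    using dm_infer_outputs_eq_singleton[OF assms(4,1,2) _ assms(7)] star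
      unanimous_second_round_forces_label[OF assms(5,7) star] by blast
qed

end
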